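(* Let $\boldsymbol k$ be an algebraically closed field with $\operatorname{char}\boldsymbol k\neq 2$, let $V$ be a vector space over $\boldsymbol k$ of finite dimension $n$, and let $\mathcal M:=V^*\otimes V^*\otimes V$. Then there is a nonempty (dense) open subset $U\subseteq\mathcal M$ such that for every $m\in U$ the $\boldsymbol k$-algebra $\{V,m\}$ is simple and has trivial automorphism group.
   Context: For $m=\sum\ell\otimes\ell'\otimes v\in\mathcal M$, the $\boldsymbol k$-algebra $\{V,m\}$ is the (not necessarily associative) algebra structure on $V$ with product $ab:=\sum\ell(a)\ell'(b)v$. Simple means having no two-sided ideals other than $0$ and $V$. The automorphism group of $\{V,m\}$ is the stabilizer of $m$ in $\mathrm{GL}(V)$ acting naturally on $\mathcal M$. *)

theory Defs
  imports "HOL-Computational_Algebra.Polynomial"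
begin

text \<open>V = k^n is modelled as functions 'n \<Rightarrow> 'k on a finite index type 'n (a basis of V).
An element m of V* \<otimes> V* \<otimes> V is given by its structure constants m i j l
(coefficient of e_l in e_i e_j).\<close>

definition alg_closed :: "'k::field itself \<Rightarrow> bool" where
  "alg_closed _ \<longleftrightarrow> (\<forall>p::'k poly. degree p > 0 \<longrightarrow> (\<exists>x. poly p x = 0))"

definition amul :: "('n::finite \<Rightarrow> 'n \<Rightarrow> 'n \<Rightarrow> 'k::field) \<Rightarrow> ('n \<Rightarrow> 'k) \<Rightarrow> ('n \<Rightarrow> 'k) \<Rightarrow> ('n \<Rightarrow> 'k)" where
  "amul m a b = (\<lambda>l. \<Sum>i\<in>UNIV. \<Sum>j\<in>UNIV. a i * b j * m i j l)"

definition is_subspace :: "('n \<Rightarrow> 'k::field) set \<Rightarrow> bool" where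
  "is_subspace I \<longleftrightarrow> (\<lambda>_. 0) \<in> I \<and> (\<forall>x\<in>I. \<forall>y\<in>I. (\<lambda>i. x i + y i) \<in> I)
      \<and> (\<forall>c. \<forall>x\<in>I. (\<lambda>i. c * x i) \<in> I)"

definition two_sided_ideal :: "('n::finite \<Rightarrow> 'n \<Rightarrow> 'n \<Rightarrow> 'k::field) \<Rightarrow> ('n \<Rightarrow> 'k) set \<Rightarrow> bool" where
  "two_sided_ideal m I \<longleftrightarrow> is_subspace I \<and> (\<forall>a. \<forall>x\<in>I. amul m a x \<in> I \<and> amul m x a \<in> I)"

definition simple_alg :: "('n::finite \<Rightarrow> 'n \<Rightarrow> 'n \<Rightarrow> 'k::field) \<Rightarrow> bool" where
  "simple_alg m \<longleftrightarrow> (\<forall>I. two_sided_ideal m I \<longrightarrow> I = {\<lambda>_. 0} \<or> I = UNIV)"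

definition is_linear :: "(('n \<Rightarrow> 'k::field) \<Rightarrow> ('n \<Rightarrow> 'k)) \<Rightarrow> bool" where
  "is_linear g \<longleftrightarrow> (\<forall>x y. g (\<lambda>i. x i + y i) = (\<lambda>i. g x i + g y i))
      \<and> (\<forall>c x. g (\<lambda>i. c * x i) = (\<lambda>i. c * g x i))"

definition automorphisms :: "('n::finite \<Rightarrow> 'n \<Rightarrow> 'n \<Rightarrow> 'k::field) \<Rightarrow> (('n \<Rightarrow> 'k) \<Rightarrow> ('n \<Rightarrow> 'k)) set" where
  "automorphisms m = {g. is_linear g \<and> bij g \<and> (\<forall>a b. g (amul m a b) = amul m (g a) (g b))}"

inductive_set poly_fun :: "(('i \<Rightarrow> 'k::comm_ring_1) \<Rightarrow> 'k) set" where
  const: "(\<lambda>_. c) \<in> poly_fun"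
| coord: "(\<lambda>x. x i) \<in> poly_fun"
| add: "f \<in> poly_fun \<Longrightarrow> g \<in> poly_fun \<Longrightarrow> (\<lambda>x. f x + g x) \<in> poly_fun"
| mult: "f \<in> poly_fun \<Longrightarrow> g \<in> poly_fun \<Longrightarrow> (\<lambda>x. f x * g x) \<in> poly_fun"

definition zariski_open :: "(('i \<Rightarrow> 'k::comm_ring_1)) set \<Rightarrow> bool" where
  "zariski_open U \<longleftrightarrow> (\<exists>F \<subseteq> poly_fun. U = {x. \<exists>f\<in>F. f x \<noteq> 0})"

end

theory Submission
  imports Defs "HOL-Analysis.Determinants"
begin

text \<open>Both properties follow from the nonvanishing of polynomials in the structure constants, so \<open>U\<close>
  can be taken to be the nonvanishing locus of their product. It is nonempty because each factor
  is nonzero at an explicit algebra and affine space over an infinite field is irreducible.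

  Simplicity: if the \<open>n\<^sup>2\<close> operators \<open>x \<mapsto> e\<^sub>a (x e\<^sub>b)\<close> span \<open>End V\<close>, which is the nonvanishing of
  one determinant, then any nonzero ideal is \<open>V\<close>.

  Rigidity: automorphisms preserve the trace form \<open>x \<mapsto> tr L\<^sub>x\<close>, hence fix the trace unit \<open>u\<close>
  characterised by \<open>tr L\<^bsub>u y\<^esub> = tr L\<^sub>y\<close> for all \<open>y\<close> (unique when a second determinant is nonzero),
  hence fix all \<open>L\<^sub>u\<^sup>k u\<close>; when these span \<open>V\<close> (a third determinant), the automorphism is the
  identity.\<close>

lemma poly_fun_sum:
  assumes "finite S" "\<And>s. s \<in> S \<Longrightarrow> f s \<in> poly_fun"
  shows "(\<lambda>x. \<Sum>s\<in>S. f s x) \<in> poly_fun"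
  using assms by (induction S rule: finite_induct) (auto intro: poly_fun.intros)

lemma poly_fun_prod:
  assumes "finite S" "\<And>s. s \<in> S \<Longrightarrow> f s \<in> poly_fun"
  shows "(\<lambda>x. \<Prod>s\<in>S. f s x) \<in> poly_fun"
  using assms by (induction S rule: finite_induct) (auto intro: poly_fun.intros)

lemma poly_fun_det:
  fixes A :: "('i \<Rightarrow> 'k::comm_ring_1) \<Rightarrow> 'k^'n::finite^'n"
  assumes "\<And>i j. (\<lambda>x. A x $ i $ j) \<in> poly_fun"
  shows "(\<lambda>x. det (A x)) \<in> poly_fun"
  unfolding det_def
  by (auto intro!: poly_fun_sum poly_fun_prod poly_fun.mult poly_fun.const assms
      simp: finite_permutations)

lemma poly_fun_on_line:
  fixes f :: "('i \<Rightarrow> 'k::comm_ring_1) \<Rightarrow> 'k"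
  assumes "f \<in> poly_fun"
  shows "\<exists>P. \<forall>s. f (\<lambda>i. p i + s * (q i - p i)) = poly P s"
  using assms
proof (induction f rule: poly_fun.induct)
  case (const c)
  show ?case by (rule exI[of _ "[:c:]"]) simp
next
  case (coord i)
  show ?case by (rule exI[of _ "[:p i, q i - p i:]"]) (simp add: algebra_simps)
next
  case (add f g)
  then obtain P Q where "\<forall>s. f (\<lambda>i. p i + s * (q i - p i)) = poly P s"
      "\<forall>s. g (\<lambda>i. p i + s * (q i - p i)) = poly Q s" by blast
  then show ?case by (intro exI[of _ "P + Q"]) simp
next
  case (mult f g)
  then obtain P Q where "\<forall>s. f (\<lambda>i. p i + s * (q i - p i)) = poly P s"
      "\<forall>s. g (\<lambda>i. p i + s * (q i - p i)) = poly Q s" by blast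
  then show ?case by (intro exI[of _ "P * Q"]) simp
qed

text \<open>Restricted to the line through \<open>p\<close> and \<open>q\<close>, the product becomes a nonzero univariate polynomial,
  which has only finitely many roots.\<close>

lemma poly_fun_mult_nonzero:
  fixes f g :: "('i \<Rightarrow> 'k::field) \<Rightarrow> 'k"
  assumes "infinite (UNIV :: 'k set)" "f \<in> poly_fun" "g \<in> poly_fun" "f p \<noteq> 0" "g q \<noteq> 0"
  shows "\<exists>x. f x * g x \<noteq> 0"
proof -
  obtain P where P: "\<And>s. f (\<lambda>i. p i + s * (q i - p i)) = poly P s"
    using poly_fun_on_line[OF assms(2)] by blast
  obtain Q where Q: "\<And>s. g (\<lambda>i. p i + s * (q i - p i)) = poly Q s"
    using poly_fun_on_line[OF assms(3)] by blast
  have "poly P 0 \<noteq> 0" "poly Q 1 \<noteq> 0"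
    using P[of 0] Q[of 1] assms(4,5) by simp_all
  then have "P * Q \<noteq> 0" by auto
  then have "finite {s. poly (P * Q) s = 0}" by (rule poly_roots_finite)
  with assms(1) obtain s where "poly (P * Q) s \<noteq> 0"
    using finite_subset[of UNIV "{s. poly (P * Q) s = 0}"] by blast
  then show ?thesis by (auto simp: P[symmetric] Q[symmetric])
qed

lemma alg_closed_infinite:
  assumes "alg_closed TYPE('k::field)"
  shows "infinite (UNIV :: 'k set)"
proof
  assume fin: "finite (UNIV :: 'k set)"
  define Q :: "'k poly" where "Q = (\<Prod>a\<in>UNIV. [:- a, 1:]) + 1"
  have "degree (\<Prod>a\<in>UNIV. [:- a, 1:] :: 'k poly) = card (UNIV :: 'k set)"
    by (subst degree_prod_eq_sum_degree) simp_all
  then have "degree Q > 0"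
    using fin by (simp add: Q_def degree_add_eq_left finite_UNIV_card_ge_0)
  then obtain x where "poly Q x = 0"
    using assms unfolding alg_closed_def by blast
  moreover have "poly (\<Prod>a\<in>UNIV. [:- a, 1:]) x = 0"
    using fin by (simp add: poly_prod prod_zero_iff)
  ultimately show False by (simp add: Q_def)
qed

lemma det_one_plus_square_zero:
  fixes E :: "'k::field^'n^'n"
  assumes "E ** E = 0"
  shows "det (mat 1 + E) \<noteq> 0"
proof -
  have "A ** (B - C) = A ** B - A ** C" "(A + B) ** C = A ** C + B ** C" for A B C :: "'k^'n^'n"
    by (simp_all add: matrix_matrix_mult_def vec_eq_iff algebra_simps sum.distrib sum_subtractf)
  with assms have "(mat 1 + E) ** (mat 1 - E) = mat 1"
    by simp
  then show ?thesis
    using invertible_det_nz invertible_right_inverse by blast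
qed

definition basis_vec :: "'n \<Rightarrow> 'n \<Rightarrow> 'k::zero_neq_one" where
  "basis_vec a = (\<lambda>i. of_bool (i = a))"

lemma sum_basis_vec_mult [simp]:
  "(\<Sum>i\<in>UNIV. basis_vec a i * F i) = (F (a::'n::finite) :: 'k::semiring_1)"
  by (simp add: basis_vec_def)

lemma amul_basis_vec_left: "amul m (basis_vec a) y = (\<lambda>l. \<Sum>j\<in>UNIV. y j * m a j l)"
proof
  fix l
  have "amul m (basis_vec a) y l = (\<Sum>i\<in>UNIV. basis_vec a i * (\<Sum>j\<in>UNIV. y j * m i j l))"
    unfolding amul_def by (simp add: sum_distrib_left mult.assoc)
  then show "amul m (basis_vec a) y l = (\<Sum>j\<in>UNIV. y j * m a j l)" by simp
qed

lemma amul_basis_vec_right: "amul m x (basis_vec b) = (\<lambda>l. \<Sum>i\<in>UNIV. x i * m i b l)"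
proof
  fix l
  have "amul m x (basis_vec b) l = (\<Sum>i\<in>UNIV. x i * (\<Sum>j\<in>UNIV. basis_vec b j * m i j l))"
    unfolding amul_def by (simp add: sum_distrib_left mult_ac del: sum_basis_vec_mult)
  then show "amul m x (basis_vec b) l = (\<Sum>i\<in>UNIV. x i * m i b l)" by simp
qed

lemma amul_basis_vec: "amul m (basis_vec a) (basis_vec b) = m a b"
  by (simp add: amul_basis_vec_right)

lemma basis_vec_expansion: "(\<lambda>i. \<Sum>j\<in>UNIV. x j * basis_vec j i) = (x :: 'n::finite \<Rightarrow> 'k::semiring_1)"
  by (simp add: basis_vec_def)

lemma amul_scale: "amul m (\<lambda>i. a * x i) (\<lambda>i. b * y i) = (\<lambda>l. a * b * amul m x y l)"
  unfolding amul_def by (simp add: sum_distrib_left mult_ac)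

lemma funpow_amul_scale:
  "(amul m (\<lambda>i. d * u i) ^^ k) (\<lambda>i. d * u i) = (\<lambda>i. d ^ Suc k * (amul m u ^^ k) u i)"
proof (induction k)
  case 0
  show ?case by simp
next
  case (Suc k)
  then show ?case by (simp add: amul_scale)
qed

lemma is_linear_add: "is_linear F \<Longrightarrow> F (\<lambda>i. x i + y i) = (\<lambda>i. F x i + F y i)"
  unfolding is_linear_def by blast

lemma is_linear_scale: "is_linear F \<Longrightarrow> F (\<lambda>i. c * x i) = (\<lambda>i. c * F x i)"
  unfolding is_linear_def by blast

lemma is_linear_sum:
  assumes "is_linear F" "finite S"
  shows "F (\<lambda>i. \<Sum>j\<in>S. c j * X j i) = (\<lambda>i. \<Sum>j\<in>S. c j * F (X j) i)"
  using assms(2)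
proof (induction S rule: finite_induct)
  case empty
  show ?case using is_linear_scale[OF assms(1), of 0 "\<lambda>_. 0"] by simp
next
  case (insert a S)
  then show ?case
    using is_linear_add[OF assms(1), of "\<lambda>i. c a * X a i"] is_linear_scale[OF assms(1)] by simp
qed

lemma is_linear_expansion:
  fixes F :: "('n::finite \<Rightarrow> 'k::field) \<Rightarrow> 'n \<Rightarrow> 'k"
  assumes "is_linear F"
  shows "F x i = (\<Sum>j\<in>UNIV. x j * F (basis_vec j) i)"
  using is_linear_sum[OF assms, of UNIV x basis_vec] by (simp add: basis_vec_expansion)

lemma is_linear_comp: "is_linear F \<Longrightarrow> is_linear G \<Longrightarrow> is_linear (F \<circ> G)"
  unfolding is_linear_def by simp

lemma is_linear_inv:
  assumes "is_linear g" "bij g"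
  shows "is_linear (inv g)"
  unfolding is_linear_def
proof (intro conjI allI)
  fix x y c
  have "g (\<lambda>i. inv g x i + inv g y i) = (\<lambda>i. x i + y i)"
       "g (\<lambda>i. c * inv g x i) = (\<lambda>i. c * x i)"
    using is_linear_add[OF assms(1)] is_linear_scale[OF assms(1)] assms(2)
    by (simp_all add: bij_is_surj surj_f_inv_f)
  then show "inv g (\<lambda>i. x i + y i) = (\<lambda>i. inv g x i + inv g y i)"
       "inv g (\<lambda>i. c * x i) = (\<lambda>i. c * inv g x i)"
    using bij_is_inj[OF assms(2)] by (simp_all add: inv_f_eq)
qed

lemma is_linear_amul: "is_linear (amul m x)"
  unfolding is_linear_def amul_def
  by (simp add: algebra_simps sum.distrib sum_distrib_left)

definition lin_trace :: "(('n::finite \<Rightarrow> 'k::comm_ring_1) \<Rightarrow> 'n \<Rightarrow> 'k) \<Rightarrow> 'k" where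
  "lin_trace F = (\<Sum>i\<in>UNIV. F (basis_vec i) i)"

lemma lin_trace_comp_commute:
  fixes F G :: "('n::finite \<Rightarrow> 'k::field) \<Rightarrow> 'n \<Rightarrow> 'k"
  assumes "is_linear F" "is_linear G"
  shows "lin_trace (F \<circ> G) = lin_trace (G \<circ> F)"
proof -
  have "lin_trace (F \<circ> G) = (\<Sum>i\<in>UNIV. \<Sum>j\<in>UNIV. G (basis_vec i) j * F (basis_vec j) i)"
    unfolding lin_trace_def o_def by (subst is_linear_expansion[OF assms(1)]) simp
  also have "\<dots> = (\<Sum>j\<in>UNIV. \<Sum>i\<in>UNIV. F (basis_vec j) i * G (basis_vec i) j)"
    by (subst sum.swap) (simp add: mult.commute)
  also have "\<dots> = lin_trace (G \<circ> F)"
    unfolding lin_trace_def o_def by (subst is_linear_expansion[OF assms(2)]) simp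
  finally show ?thesis .
qed

lemma is_subspace_sum:
  assumes "is_subspace I" "finite S" "\<And>q. q \<in> S \<Longrightarrow> f q \<in> I"
  shows "(\<lambda>i. \<Sum>q\<in>S. c q * f q i) \<in> I"
  using assms(2,3)
proof (induction S rule: finite_induct)
  case empty
  then show ?case using assms(1) unfolding is_subspace_def by simp
next
  case (insert a S)
  then have "(\<lambda>i. c a * f a i) \<in> I" "(\<lambda>i. \<Sum>q\<in>S. c q * f q i) \<in> I"
    using assms(1) unfolding is_subspace_def by blast+
  then show ?case
    using assms(1) insert(1,2) unfolding is_subspace_def by simp
qed

section \<open>Simplicity\<close>

text \<open>Column \<open>(a, b)\<close> of \<open>bimult_matrix m\<close> is the operator \<open>x \<mapsto> e\<^sub>a (x e\<^sub>b)\<close>, written as a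
  vector indexed by matrix positions \<open>(l, j)\<close>.\<close>

definition bimult_matrix :: "('n::finite \<Rightarrow> 'n \<Rightarrow> 'n \<Rightarrow> 'k::field) \<Rightarrow> 'k^('n \<times> 'n)^('n \<times> 'n)" where
  "bimult_matrix m = (\<chi> p q. \<Sum>j'\<in>UNIV. m (snd p) (snd q) j' * m (fst q) j' (fst p))"

lemma amul_basis_vec_amul_basis_vec:
  "amul m (basis_vec a) (amul m x (basis_vec b)) l = (\<Sum>j\<in>UNIV. x j * bimult_matrix m $ (l, j) $ (a, b))"
proof -
  have "amul m (basis_vec a) (amul m x (basis_vec b)) l
      = (\<Sum>j'\<in>UNIV. \<Sum>j\<in>UNIV. x j * m j b j' * m a j' l)"
    by (simp add: amul_basis_vec_left amul_basis_vec_right sum_distrib_right)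
  also have "\<dots> = (\<Sum>j\<in>UNIV. x j * bimult_matrix m $ (l, j) $ (a, b))"
    by (subst sum.swap) (simp add: bimult_matrix_def sum_distrib_left mult.assoc)
  finally show ?thesis .
qed

lemma bimult_combination_exists:
  fixes m :: "'n::finite \<Rightarrow> 'n \<Rightarrow> 'n \<Rightarrow> 'k::field"
  assumes det: "det (bimult_matrix m) \<noteq> 0" and xz: "x z \<noteq> 0"
  obtains c where
    "y = (\<lambda>l. \<Sum>q\<in>UNIV. c $ q * amul m (basis_vec (fst q)) (amul m x (basis_vec (snd q))) l)"
proof -
  define w :: "'k^('n \<times> 'n)" where "w = (\<chi> p. if snd p = z then y (fst p) / x z else 0)"
  obtain c where c: "bimult_matrix m *v c = w"
    using cramer[OF det] by blast
  have "(\<Sum>q\<in>UNIV. c $ q * amul m (basis_vec (fst q)) (amul m x (basis_vec (snd q))) l)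
      = (\<Sum>j\<in>UNIV. x j * (bimult_matrix m *v c) $ (l, j))" for l
    by (simp add: amul_basis_vec_amul_basis_vec matrix_vector_mult_def sum_distrib_left
        sum_distrib_right mult_ac sum.swap[where A = UNIV and B = "UNIV :: ('n \<times> 'n) set"])
  also have "\<dots> l = y l" for l
    using xz by (simp add: c w_def if_distrib cong: if_cong)
  finally show ?thesis
    by (intro that[of c]) (simp add: fun_eq_iff)
qed

lemma simple_alg_if_det_bimult_matrix:
  fixes m :: "'n::finite \<Rightarrow> 'n \<Rightarrow> 'n \<Rightarrow> 'k::field"
  assumes det: "det (bimult_matrix m) \<noteq> 0"
  shows "simple_alg m"
  unfolding simple_alg_def
proof (intro allI impI)
  fix I assume I: "two_sided_ideal m I"
  then have sub: "is_subspace I" and zero: "(\<lambda>_. 0) \<in> I"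
    unfolding two_sided_ideal_def is_subspace_def by blast+
  show "I = {\<lambda>_. 0} \<or> I = UNIV"
  proof (cases "I \<subseteq> {\<lambda>_. 0}")
    case True
    with zero show ?thesis by blast
  next
    case False
    then obtain x z where x: "x \<in> I" "x z \<noteq> 0" by fastforce
    have mem: "amul m (basis_vec a) (amul m x (basis_vec b)) \<in> I" for a b
      using I x(1) unfolding two_sided_ideal_def by blast
    have "y \<in> I" for y
    proof -
      obtain c where
        y: "y = (\<lambda>l. \<Sum>q\<in>UNIV. c $ q * amul m (basis_vec (fst q)) (amul m x (basis_vec (snd q))) l)"
        using bimult_combination_exists[where x = x and z = z and y = y, OF det x(2)] .
      show ?thesis
        unfolding y by (rule is_subspace_sum[OF sub]) (simp_all add: mem)
    qed
    then show ?thesis by blast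
  qed
qed

text \<open>In the algebra below \<open>e\<^sub>z\<close> is a right unit, \<open>e\<^sub>j e\<^sub>j = e\<^sub>z\<close> for \<open>j \<noteq> z\<close> and all other products
  of basis vectors vanish; then \<open>x \<mapsto> e\<^sub>a (x e\<^sub>b)\<close> is the matrix unit \<open>E\<^sub>a\<^sub>b\<close> for \<open>b \<noteq> z\<close> and
  \<open>E\<^sub>a\<^sub>z + E\<^sub>z\<^sub>a\<close> (resp. \<open>E\<^sub>z\<^sub>z\<close>) for \<open>b = z\<close>.\<close>

definition simple_witness :: "'n \<Rightarrow> 'n \<Rightarrow> 'n \<Rightarrow> 'n \<Rightarrow> 'k::field" where
  "simple_witness z i j l = of_bool (j = z \<and> l = i) + of_bool (j \<noteq> z \<and> i = j \<and> l = z)"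

lemma bimult_matrix_simple_witness:
  "bimult_matrix (simple_witness z :: 'n::finite \<Rightarrow> _ \<Rightarrow> _ \<Rightarrow> 'k::field)
     = mat 1 + (\<chi> p q. of_bool (snd q = z \<and> fst q \<noteq> z \<and> p = (z, fst q)))"
proof -
  have "bimult_matrix (simple_witness z :: 'n \<Rightarrow> _ \<Rightarrow> _ \<Rightarrow> 'k) $ (l, j) $ (a, b)
      = of_bool ((l, j) = (a, b)) + of_bool (b = z \<and> a \<noteq> z \<and> (l, j) = (z, a))" for l j a b
    by (cases "b = z") (auto simp: bimult_matrix_def simple_witness_def)
  then show ?thesis by (simp add: vec_eq_iff mat_def)
qed

lemma det_bimult_matrix_simple_witness:
  "det (bimult_matrix (simple_witness z :: 'n::finite \<Rightarrow> _ \<Rightarrow> _ \<Rightarrow> 'k::field)) \<noteq> 0"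
proof -
  let ?E = "\<chi> p q. of_bool (snd q = z \<and> fst q \<noteq> z \<and> p = (z, fst q)) :: 'k^('n \<times> 'n)^('n \<times> 'n)"
  have "(?E ** ?E) $ p $ q = 0" for p q
    unfolding matrix_matrix_mult_def vec_lambda_beta by (rule sum.neutral) auto
  then have "?E ** ?E = 0" by (simp add: vec_eq_iff)
  then show ?thesis
    unfolding bimult_matrix_simple_witness by (rule det_one_plus_square_zero)
qed

section \<open>Rigidity\<close>

definition trace_vec :: "('n::finite \<Rightarrow> 'n \<Rightarrow> 'n \<Rightarrow> 'k::field) \<Rightarrow> 'k^'n" where
  "trace_vec m = (\<chi> a. \<Sum>i\<in>UNIV. m a i i)"

definition trace_form :: "('n::finite \<Rightarrow> 'n \<Rightarrow> 'n \<Rightarrow> 'k::field) \<Rightarrow> ('n \<Rightarrow> 'k) \<Rightarrow> 'k" where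
  "trace_form m x = lin_trace (amul m x)"

lemma trace_form_eq: "trace_form m x = (\<Sum>a\<in>UNIV. x a * trace_vec m $ a)"
  unfolding trace_form_def lin_trace_def amul_basis_vec_right trace_vec_def
  by (subst sum.swap) (simp add: sum_distrib_left)

lemma trace_form_automorphism:
  assumes g: "g \<in> automorphisms m"
  shows "trace_form m (g x) = trace_form m x"
proof -
  have lin: "is_linear g" and bij: "bij g" and hom: "\<And>a b. g (amul m a b) = amul m (g a) (g b)"
    using g unfolding automorphisms_def by auto
  have "amul m (g x) y = g (amul m x (inv g y))" for y
    using hom[of x "inv g y"] bij by (simp add: bij_is_surj surj_f_inv_f)
  then have "amul m (g x) = g \<circ> (amul m x \<circ> inv g)"
    by (simp add: fun_eq_iff)
  then have "trace_form m (g x) = lin_trace ((amul m x \<circ> inv g) \<circ> g)"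
    unfolding trace_form_def
    by (simp add: lin_trace_comp_commute lin is_linear_comp is_linear_amul is_linear_inv bij)
  also have "(amul m x \<circ> inv g) \<circ> g = amul m x"
    using bij by (simp add: fun_eq_iff bij_is_inj)
  finally show ?thesis unfolding trace_form_def .
qed

text \<open>Entry \<open>(j, i)\<close> is \<open>trace_form m (e\<^sub>i e\<^sub>j)\<close>.\<close>

definition trace_matrix :: "('n::finite \<Rightarrow> 'n \<Rightarrow> 'n \<Rightarrow> 'k::field) \<Rightarrow> 'k^'n^'n" where
  "trace_matrix m = (\<chi> j i. \<Sum>l\<in>UNIV. m i j l * trace_vec m $ l)"

lemma trace_form_amul:
  "trace_form m (amul m x y) = (\<Sum>j\<in>UNIV. y j * (trace_matrix m *v (\<chi> i. x i)) $ j)"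
proof -
  have "trace_form m (amul m x y) = (\<Sum>l\<in>UNIV. \<Sum>i\<in>UNIV. \<Sum>j\<in>UNIV. x i * y j * m i j l * trace_vec m $ l)"
    unfolding trace_form_eq amul_def by (simp add: sum_distrib_right)
  also have "\<dots> = (\<Sum>j\<in>UNIV. \<Sum>i\<in>UNIV. \<Sum>l\<in>UNIV. x i * y j * m i j l * trace_vec m $ l)"
    by (subst sum.swap, subst (2) sum.swap, subst sum.swap) (rule refl)
  also have "\<dots> = (\<Sum>j\<in>UNIV. y j * (trace_matrix m *v (\<chi> i. x i)) $ j)"
    by (simp add: trace_matrix_def matrix_vector_mult_def sum_distrib_left sum_distrib_right mult_ac)
  finally show ?thesis .
qed

text \<open>A trace unit \<open>u\<close> satisfies \<open>tr L\<^bsub>u y\<^esub> = tr L\<^sub>y\<close> for all \<open>y\<close>; this characterisation by the invariant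
  trace form shows that automorphisms permute trace units.\<close>

definition is_trace_unit :: "('n::finite \<Rightarrow> 'n \<Rightarrow> 'n \<Rightarrow> 'k::field) \<Rightarrow> ('n \<Rightarrow> 'k) \<Rightarrow> bool" where
  "is_trace_unit m u \<longleftrightarrow> trace_matrix m *v (\<chi> i. u i) = trace_vec m"

lemma is_trace_unit_iff: "is_trace_unit m u \<longleftrightarrow> (\<forall>y. trace_form m (amul m u y) = trace_form m y)"
proof
  assume "is_trace_unit m u"
  then show "\<forall>y. trace_form m (amul m u y) = trace_form m y"
    by (simp add: is_trace_unit_def trace_form_amul) (simp add: trace_form_eq)
next
  assume unit: "\<forall>y. trace_form m (amul m u y) = trace_form m y"
  have "(trace_matrix m *v (\<chi> i. u i)) $ j = trace_vec m $ j" for j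
    using unit[rule_format, of "basis_vec j"] by (simp add: trace_form_amul) (simp add: trace_form_eq)
  then show "is_trace_unit m u"
    by (simp add: is_trace_unit_def vec_eq_iff)
qed

lemma is_trace_unit_automorphism:
  assumes g: "g \<in> automorphisms m" and u: "is_trace_unit m u"
  shows "is_trace_unit m (g u)"
  unfolding is_trace_unit_iff
proof
  fix y
  have bij: "bij g" and hom: "\<And>a b. g (amul m a b) = amul m (g a) (g b)"
    using g unfolding automorphisms_def by auto
  then have "trace_form m (amul m (g u) y) = trace_form m (g (amul m u (inv g y)))"
    by (simp add: bij_is_surj surj_f_inv_f)
  also have "\<dots> = trace_form m (inv g y)"
    using u by (simp add: trace_form_automorphism[OF g] is_trace_unit_iff)
  also have "\<dots> = trace_form m y"
    using trace_form_automorphism[OF g, of "inv g y"] bij by (simp add: bij_is_surj surj_f_inv_f)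
  finally show "trace_form m (amul m (g u) y) = trace_form m y" .
qed

text \<open>The Cramer numerators of the trace-unit equation: a polynomial function of \<open>m\<close>, equal to
  \<open>det (trace_matrix m)\<close> times the trace unit.\<close>

definition scaled_trace_unit :: "('n::finite \<Rightarrow> 'n \<Rightarrow> 'n \<Rightarrow> 'k::field) \<Rightarrow> 'n \<Rightarrow> 'k" where
  "scaled_trace_unit m k = det (\<chi> i j. if j = k then trace_vec m $ i else trace_matrix m $ i $ j)"

lemma is_trace_unit_iff_scaled:
  assumes "det (trace_matrix m) \<noteq> 0"
  shows "is_trace_unit m u \<longleftrightarrow> scaled_trace_unit m = (\<lambda>k. det (trace_matrix m) * u k)"
  unfolding is_trace_unit_def cramer[OF assms] scaled_trace_unit_def
  using assms by (auto simp: vec_eq_iff fun_eq_iff field_simps)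

lemma automorphism_fixes_scaled_trace_unit:
  assumes "det (trace_matrix m) \<noteq> 0" "g \<in> automorphisms m"
  shows "g (scaled_trace_unit m) = scaled_trace_unit m"
proof -
  define d where "d = det (trace_matrix m)"
  define u where "u = (\<lambda>k. scaled_trace_unit m k / d)"
  have "is_trace_unit m u"
    using assms(1) by (simp add: is_trace_unit_iff_scaled u_def d_def)
  then have "scaled_trace_unit m = (\<lambda>k. d * g u k)"
    using is_trace_unit_automorphism[OF assms(2)] is_trace_unit_iff_scaled[OF assms(1)] d_def by blast
  moreover have "g (scaled_trace_unit m) = (\<lambda>k. d * g u k)"
    using assms is_linear_scale[of g d u] by (simp add: automorphisms_def u_def d_def)
  ultimately show ?thesis by simp
qed

text \<open>Every automorphism fixes the columns, since it fixes the scaled trace unit.\<close>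

definition orbit_matrix :: "('n::finite \<Rightarrow> 'n \<Rightarrow> 'n \<Rightarrow> 'k::field) \<Rightarrow> ('n \<Rightarrow> nat) \<Rightarrow> 'k^'n^'n" where
  "orbit_matrix m h = (\<chi> l j. ((amul m (scaled_trace_unit m) ^^ h j) (scaled_trace_unit m)) l)"

lemma automorphism_funpow_amul:
  assumes "g \<in> automorphisms m"
  shows "g ((amul m u ^^ k) x) = (amul m (g u) ^^ k) (g x)"
  using assms by (induction k) (simp_all add: automorphisms_def)

lemma is_linear_fixing_columns_eq_id:
  fixes A :: "'k::field^'n::finite^'n"
  assumes "is_linear g" "det A \<noteq> 0" "\<And>j. g (\<lambda>l. A $ l $ j) = (\<lambda>l. A $ l $ j)"
  shows "g = id"
proof
  fix y
  obtain c where c: "A *v c = (\<chi> l. y l)"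
    using cramer[OF assms(2)] by blast
  then have y: "y = (\<lambda>l. \<Sum>j\<in>UNIV. c $ j * A $ l $ j)"
    by (auto simp: vec_eq_iff matrix_vector_mult_def mult.commute)
  show "g y = id y"
    by (subst (1 2) y) (simp add: is_linear_sum[OF assms(1)] assms(3))
qed

lemma id_automorphism: "id \<in> automorphisms m"
  unfolding automorphisms_def is_linear_def by simp

lemma automorphisms_trivial:
  assumes "det (trace_matrix m) \<noteq> 0" "det (orbit_matrix m h) \<noteq> 0"
  shows "automorphisms m = {id}"
proof -
  have "g = id" if g: "g \<in> automorphisms m" for g
  proof (rule is_linear_fixing_columns_eq_id[OF _ assms(2)])
    show "is_linear g" using g by (simp add: automorphisms_def)
    fix j
    show "g (\<lambda>l. orbit_matrix m h $ l $ j) = (\<lambda>l. orbit_matrix m h $ l $ j)"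
      by (simp add: orbit_matrix_def automorphism_funpow_amul[OF g]
          automorphism_fixes_scaled_trace_unit[OF assms(1) g] del: funpow.simps)
  qed
  then show ?thesis using id_automorphism by blast
qed

locale enumeration =
  fixes h :: "'n::finite \<Rightarrow> nat"
  assumes bij_h: "bij_betw h UNIV {0..<CARD('n)}"
begin

lemma h_inj: "h a = h b \<longleftrightarrow> a = b"
  using bij_h unfolding bij_betw_def inj_on_def by blast

lemma h_less: "h a < CARD('n)"
  using bij_h unfolding bij_betw_def by auto

lemma inv_h: "inv h (h a) = a"
  using bij_h unfolding bij_betw_def by (simp add: inv_f_f)

lemma h_inv: "k < CARD('n) \<Longrightarrow> h (inv h k) = k"
  using bij_h unfolding bij_betw_def by (auto intro: f_inv_into_f)

definition first :: 'n where
  "first = inv h 0"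

lemma h_first: "h first = 0"
  unfolding first_def by (simp add: h_inv finite_UNIV_card_ge_0)

definition succ :: "'n \<Rightarrow> 'n" where
  "succ b = (if Suc (h b) < CARD('n) then inv h (Suc (h b)) else b)"

lemma succ_eq_self_iff: "succ b = b \<longleftrightarrow> Suc (h b) = CARD('n)"
  using h_less[of b] h_inv[of "Suc (h b)"] by (auto simp: succ_def)

text \<open>Left multiplication by \<open>e\<^bsub>first\<^esub>\<close> shifts the basis along \<open>h\<close> (fixing the last vector),
  and every other basis vector is an idempotent annihilating the rest from the left. Then every
  \<open>tr L\<^bsub>e\<^sub>a\<^esub>\<close> equals 1, \<open>e\<^bsub>first\<^esub>\<close> is the trace unit, and its powers run through the whole basis.\<close>

definition rigid_witness :: "'n \<Rightarrow> 'n \<Rightarrow> 'n \<Rightarrow> 'k::field" where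
  "rigid_witness a b l = (if h a = 0 then of_bool (l = succ b) else of_bool (a = b \<and> l = a))"

lemma card_succ_fixed: "card {i. succ i = i} = 1"
proof -
  have "succ i = i \<longleftrightarrow> h i = h (inv h (CARD('n) - 1))" for i
    using h_inv[of "CARD('n) - 1"] h_less[of i] by (auto simp: succ_eq_self_iff)
  then have "{i. succ i = i} = {inv h (CARD('n) - 1)}"
    by (auto simp: h_inj)
  then show ?thesis by simp
qed

lemma trace_vec_rigid_witness: "trace_vec (rigid_witness :: _ \<Rightarrow> _ \<Rightarrow> _ \<Rightarrow> 'k::field) = (\<chi> a. 1)"
proof -
  have "(\<Sum>i\<in>UNIV. rigid_witness a i i :: 'k) = 1" for a
  proof (cases "h a = 0")
    case True
    then have "(\<Sum>i\<in>UNIV. rigid_witness a i i) = of_nat (card {i. succ i = i})"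
      by (simp add: rigid_witness_def eq_commute[of _ "succ _"])
    then show ?thesis by (simp add: card_succ_fixed)
  next
    case False
    then have "(\<Sum>i\<in>UNIV. rigid_witness a i i) = (\<Sum>i\<in>UNIV. of_bool (i = a))"
      by (intro sum.cong) (auto simp: rigid_witness_def)
    then show ?thesis by simp
  qed
  then show ?thesis by (simp add: trace_vec_def vec_eq_iff)
qed

lemma trace_matrix_rigid_witness:
  "trace_matrix (rigid_witness :: _ \<Rightarrow> _ \<Rightarrow> _ \<Rightarrow> 'k::field) = mat 1 + (\<chi> j i. of_bool (h i = 0 \<and> i \<noteq> j))"
proof -
  have "(\<Sum>l\<in>UNIV. rigid_witness i j l :: 'k) = of_bool (i = j) + of_bool (h i = 0 \<and> i \<noteq> j)" for i j
  proof (cases "h i = 0")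
    case True
    then show ?thesis by (simp add: rigid_witness_def)
  next
    case False
    then have "(\<Sum>l\<in>UNIV. rigid_witness i j l :: 'k) = (\<Sum>l\<in>UNIV. of_bool (i = j \<and> l = i))"
      by (intro sum.cong) (auto simp: rigid_witness_def)
    with False show ?thesis by simp
  qed
  then show ?thesis
    by (auto simp: trace_matrix_def trace_vec_rigid_witness vec_eq_iff mat_def)
qed

lemma det_trace_matrix_rigid_witness: "det (trace_matrix (rigid_witness :: _ \<Rightarrow> _ \<Rightarrow> _ \<Rightarrow> 'k::field)) \<noteq> 0"
proof -
  let ?E = "\<chi> j i. of_bool (h i = 0 \<and> i \<noteq> j) :: 'k^'n^'n"
  have "(?E ** ?E) $ j $ i = 0" for i j
    unfolding matrix_matrix_mult_def vec_lambda_beta by (rule sum.neutral) (use h_inj in fastforce)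
  then have "?E ** ?E = 0" by (simp add: vec_eq_iff)
  then show ?thesis
    unfolding trace_matrix_rigid_witness by (rule det_one_plus_square_zero)
qed

lemma scaled_trace_unit_rigid_witness:
  "scaled_trace_unit (rigid_witness :: _ \<Rightarrow> _ \<Rightarrow> _ \<Rightarrow> 'k::field)
     = (\<lambda>k. det (trace_matrix (rigid_witness :: _ \<Rightarrow> _ \<Rightarrow> _ \<Rightarrow> 'k)) * basis_vec first k)"
proof -
  have "is_trace_unit (rigid_witness :: _ \<Rightarrow> _ \<Rightarrow> _ \<Rightarrow> 'k) (basis_vec first)"
    by (auto simp: is_trace_unit_def trace_matrix_rigid_witness trace_vec_rigid_witness vec_eq_iff
        matrix_vector_mult_def mat_def basis_vec_def h_first)
  then show ?thesis
    using is_trace_unit_iff_scaled[OF det_trace_matrix_rigid_witness] by blast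
qed

lemma funpow_amul_rigid_witness:
  "k < CARD('n) \<Longrightarrow> (amul rigid_witness (basis_vec first) ^^ k) (basis_vec first)
     = (basis_vec (inv h k) :: 'n \<Rightarrow> 'k::field)"
proof (induction k)
  case 0
  show ?case by (simp add: first_def)
next
  case (Suc k)
  then have "succ (inv h k) = inv h (Suc k)"
    by (simp add: succ_def h_inv)
  with Suc have "(amul rigid_witness (basis_vec first) ^^ Suc k) (basis_vec first)
      = (rigid_witness first (inv h k) :: 'n \<Rightarrow> 'k)"
    by (simp add: amul_basis_vec)
  also have "\<dots> = basis_vec (inv h (Suc k))"
    using \<open>succ (inv h k) = inv h (Suc k)\<close> by (simp add: rigid_witness_def h_first basis_vec_def fun_eq_iff)
  finally show ?case .
qed

lemma det_orbit_matrix_rigid_witness: "det (orbit_matrix (rigid_witness :: _ \<Rightarrow> _ \<Rightarrow> _ \<Rightarrow> 'k::field) h) \<noteq> 0"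
proof -
  define d :: 'k where "d = det (trace_matrix rigid_witness)"
  have "orbit_matrix rigid_witness h $ l $ j = d ^ Suc (h j) * of_bool (l = j)" for l j
    by (simp add: orbit_matrix_def scaled_trace_unit_rigid_witness funpow_amul_scale
        funpow_amul_rigid_witness h_less inv_h d_def del: funpow.simps) (simp add: basis_vec_def)
  moreover have "d \<noteq> 0"
    unfolding d_def by (rule det_trace_matrix_rigid_witness)
  ultimately show ?thesis
    by (simp add: det_diagonal)
qed

end

definition alg_of :: "('n \<times> 'n \<times> 'n \<Rightarrow> 'k) \<Rightarrow> 'n \<Rightarrow> 'n \<Rightarrow> 'n \<Rightarrow> 'k" where
  "alg_of c i j l = c (i, j, l)"

lemma alg_of_uncurry: "alg_of (\<lambda>(i, j, l). m i j l) = m"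
  by (simp add: alg_of_def fun_eq_iff)

lemma poly_fun_det_bimult_matrix:
  "(\<lambda>c. det (bimult_matrix (alg_of c :: 'n::finite \<Rightarrow> 'n \<Rightarrow> 'n \<Rightarrow> 'k::field))) \<in> poly_fun"
  by (intro poly_fun_det)
    (auto simp: bimult_matrix_def alg_of_def intro!: poly_fun_sum poly_fun.mult poly_fun.coord)

lemma poly_fun_trace_vec:
  "(\<lambda>c. trace_vec (alg_of c :: 'n::finite \<Rightarrow> 'n \<Rightarrow> 'n \<Rightarrow> 'k::field) $ a) \<in> poly_fun"
  unfolding trace_vec_def by (auto simp: alg_of_def intro!: poly_fun_sum poly_fun.coord)

lemma poly_fun_trace_matrix:
  "(\<lambda>c. trace_matrix (alg_of c :: 'n::finite \<Rightarrow> 'n \<Rightarrow> 'n \<Rightarrow> 'k::field) $ j $ i) \<in> poly_fun"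
  unfolding trace_matrix_def
  by (auto simp: alg_of_def intro!: poly_fun_sum poly_fun.mult poly_fun.coord poly_fun_trace_vec)

lemma poly_fun_det_trace_matrix:
  "(\<lambda>c. det (trace_matrix (alg_of c :: 'n::finite \<Rightarrow> 'n \<Rightarrow> 'n \<Rightarrow> 'k::field))) \<in> poly_fun"
  by (intro poly_fun_det poly_fun_trace_matrix)

lemma poly_fun_scaled_trace_unit:
  "(\<lambda>c. scaled_trace_unit (alg_of c :: 'n::finite \<Rightarrow> 'n \<Rightarrow> 'n \<Rightarrow> 'k::field) k) \<in> poly_fun"
  unfolding scaled_trace_unit_def
proof (rule poly_fun_det)
  fix i j
  show "(\<lambda>c. (\<chi> i j. if j = k then trace_vec (alg_of c) $ i else trace_matrix (alg_of c) $ i $ j) $ i $ j)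
      \<in> poly_fun"
    by (cases "j = k") (simp_all add: poly_fun_trace_vec poly_fun_trace_matrix)
qed

lemma poly_fun_funpow_amul:
  fixes u x :: "('n::finite \<times> 'n \<times> 'n \<Rightarrow> 'k::field) \<Rightarrow> 'n \<Rightarrow> 'k"
  assumes "\<And>l. (\<lambda>c. u c l) \<in> poly_fun" "\<And>l. (\<lambda>c. x c l) \<in> poly_fun"
  shows "(\<lambda>c. (amul (alg_of c) (u c) ^^ k) (x c) l) \<in> poly_fun"
proof (induction k arbitrary: l)
  case 0
  show ?case using assms(2) by simp
next
  case (Suc k)
  then show ?case
    unfolding funpow.simps o_apply amul_def
    by (auto simp: alg_of_def intro!: poly_fun_sum poly_fun.mult poly_fun.coord assms(1))
qed

lemma poly_fun_det_orbit_matrix: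
  "(\<lambda>c. det (orbit_matrix (alg_of c :: 'n::finite \<Rightarrow> 'n \<Rightarrow> 'n \<Rightarrow> 'k::field) h)) \<in> poly_fun"
  unfolding orbit_matrix_def
  by (intro poly_fun_det) (simp add: poly_fun_funpow_amul poly_fun_scaled_trace_unit)

theorem theorem4:
  assumes "alg_closed TYPE('k::field)"
    and "(2::'k) \<noteq> 0"
  shows "\<exists>U :: ('n::finite \<times> 'n \<times> 'n \<Rightarrow> 'k) set.
           zariski_open U \<and> U \<noteq> {} \<and>
           (\<forall>c\<in>U. let m = (\<lambda>i j l. c (i, j, l)) in
               simple_alg m \<and> automorphisms m = {id})"
proof -
  obtain h :: "'n \<Rightarrow> nat" where "bij_betw h UNIV {0..<CARD('n)}"
    using ex_bij_betw_finite_nat[of "UNIV :: 'n set"] by auto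
  then interpret enumeration h by unfold_locales
  define F :: "('n \<times> 'n \<times> 'n \<Rightarrow> 'k) \<Rightarrow> 'k" where
    "F c = det (bimult_matrix (alg_of c))" for c
  define G :: "('n \<times> 'n \<times> 'n \<Rightarrow> 'k) \<Rightarrow> 'k" where
    "G c = det (trace_matrix (alg_of c)) * det (orbit_matrix (alg_of c) h)" for c
  have F: "F \<in> poly_fun" and G: "G \<in> poly_fun"
    unfolding F_def G_def
    by (auto intro: poly_fun.mult poly_fun_det_bimult_matrix poly_fun_det_trace_matrix poly_fun_det_orbit_matrix)
  have "F (\<lambda>(i, j, l). simple_witness first i j l) \<noteq> 0"
    by (simp add: F_def alg_of_uncurry det_bimult_matrix_simple_witness)
  moreover have "G (\<lambda>(i, j, l). rigid_witness i j l) \<noteq> 0"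
    by (simp add: G_def alg_of_uncurry det_trace_matrix_rigid_witness det_orbit_matrix_rigid_witness)
  ultimately obtain c0 where "F c0 * G c0 \<noteq> 0"
    using poly_fun_mult_nonzero[OF alg_closed_infinite[OF assms(1)] F G] by blast
  have "zariski_open {c. F c * G c \<noteq> 0}"
    unfolding zariski_open_def using F G by (intro exI[of _ "{\<lambda>c. F c * G c}"]) (auto intro: poly_fun.mult)
  moreover have "simple_alg (alg_of c) \<and> automorphisms (alg_of c) = {id}" if "F c * G c \<noteq> 0" for c
    using that simple_alg_if_det_bimult_matrix[of "alg_of c"] automorphisms_trivial[of "alg_of c" h]
    by (simp add: F_def G_def)
  ultimately show ?thesis
    using \<open>F c0 * G c0 \<noteq> 0\<close> by (intro exI[of _ "{c. F c * G c \<noteq> 0}"]) (auto simp: alg_of_def[abs_def])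
qed

end
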